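(* Let $Q=(q_n)_{n\ge1}$ be a basic sequence that is infinite in limit, and let $i>2$ be an integer such that $\sum_{j=1}^i jl_j>\sum_{j=1}^i 2l_j$. For real $w,z\ge0$ let $$f_i(w,z)=\frac{\left(\sum_{j=1}^i 2l_j\right)+2w+z}{\left(\sum_{j=1}^i jl_j\right)+(i+1)w+z}.$$ Then for all $(w,z)\in\{0,1,\dots,l_{i+1}\}\times\{0,1,\dots,i\}$, $$f_i(w,z)<f_i(0,i+1)=\frac{\left(\sum_{j=1}^i 2l_j\right)+i+1}{\left(\sum_{j=1}^i jl_j\right)+i+1}.$$
   Context: A basic sequence is a sequence $Q=(q_n)_{n\ge1}$ of integers with $q_n\ge 2$; it is infinite in limit if $q_n\to\infty$. For each positive integer $j$ let $\nu_j=\min\{N : q_m\ge 2j^2 \text{ for all } m\ge N\}$. Define $l_1=\max(\nu_2-1,1)$ and, recursively for $i\ge 2$, $l_i=\max\big(\min\{k\in\mathbb{N} : l_1+2l_2+\cdots+(i-1)l_{i-1}+ik\ge \nu_{i+1}-1\},1\big)$, where $\mathbb{N}$ is the set of positive integers. *)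

theory Defs
  imports Complex_Main
begin

text \<open>A basic sequence Q = (q_n)_{n>=1}, represented as a function nat => int;
  only the values at n >= 1 are relevant.\<close>

definition basic_seq :: "(nat \<Rightarrow> int) \<Rightarrow> bool" where
  "basic_seq q \<longleftrightarrow> (\<forall>n\<ge>1. q n \<ge> 2)"

definition infinite_in_limit :: "(nat \<Rightarrow> int) \<Rightarrow> bool" where
  "infinite_in_limit q \<longleftrightarrow> filterlim q at_top sequentially"

definition nu :: "(nat \<Rightarrow> int) \<Rightarrow> nat \<Rightarrow> nat" where
  "nu q j = (LEAST N. N \<ge> 1 \<and> (\<forall>m\<ge>N. q m \<ge> 2 * int j ^ 2))"

text \<open>lpair q i = (l_i, l_1 + 2 l_2 + ... + i l_i) for i >= 1; index 0 is a dummy.\<close>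
fun lpair :: "(nat \<Rightarrow> int) \<Rightarrow> nat \<Rightarrow> nat \<times> nat" where
  "lpair q 0 = (0, 0)"
| "lpair q (Suc i) =
     (if i = 0 then (let a = max (nu q 2 - 1) 1 in (a, a))
      else (let S = snd (lpair q i);
                k = max (LEAST k. k \<ge> 1 \<and> S + Suc i * k \<ge> nu q (Suc i + 1) - 1) 1
            in (k, S + Suc i * k)))"

definition l :: "(nat \<Rightarrow> int) \<Rightarrow> nat \<Rightarrow> nat" where
  "l q i = fst (lpair q i)"

definition f :: "(nat \<Rightarrow> int) \<Rightarrow> nat \<Rightarrow> real \<Rightarrow> real \<Rightarrow> real" where
  "f q i w z = ((\<Sum>j=1..i. 2 * real (l q j)) + 2 * w + z) /
               ((\<Sum>j=1..i. real j * real (l q j)) + (real i + 1) * w + z)"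

end

theory Submission
  imports Defs
begin

text \<open>With \<open>A = \<Sum> 2 l\<^sub>j\<close>, \<open>B = \<Sum> j l\<^sub>j\<close> and \<open>k = i + 1\<close>, cross-multiplying the claimed
  inequality leaves \<open>w (k A - 2 B + k (k - 2)) + (k - z) (B - A) > 0\<close>. The first summand is
  nonnegative because \<open>j \<le> i\<close> in every term of \<open>B\<close> gives \<open>2 B \<le> i A\<close>; the second is positive
  because \<open>z < k\<close> and \<open>A < B\<close>. No property of \<open>Q\<close> beyond \<open>A < B\<close> is used.\<close>

lemma sum_index_weighted_le:
  fixes x :: "nat \<Rightarrow> real"
  assumes "\<And>j. x j \<ge> 0"
  shows "(\<Sum>j=1..i. real j * x j) \<le> real i * (\<Sum>j=1..i. x j)"
  unfolding sum_distrib_left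
  by (intro sum_mono mult_right_mono) (auto simp: assms)

lemma frac_shifted_less:
  fixes A B k w z :: real
  assumes "A < B" "0 \<le> A" "2 * B \<le> k * A" "k \<ge> 2" "0 \<le> w" "0 \<le> z" "z < k"
  shows "(A + 2 * w + z) / (B + k * w + z) < (A + k) / (B + k)"
proof -
  have slack_w: "0 \<le> w * (k * A - 2 * B + k * (k - 2))"
    using assms by (intro mult_nonneg_nonneg) auto
  have slack_z: "0 < (k - z) * (B - A)"
    using assms by (intro mult_pos_pos) auto
  have "(A + 2 * w + z) * (B + k) < (A + k) * (B + k * w + z)"
    using slack_w slack_z by (simp add: algebra_simps)
  moreover have "0 < B + k * w + z" "0 < B + k"
    using assms by (smt (verit) mult_nonneg_nonneg)+
  ultimately show ?thesis by (simp add: divide_simps)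
qed

theorem mainTheorem15:
  fixes q :: "nat \<Rightarrow> int" and i :: nat
  assumes "basic_seq q" and "infinite_in_limit q"
    and "i > 2"
    and "(\<Sum>j=1..i. j * l q j) > (\<Sum>j=1..i. 2 * l q j)"
  shows "\<forall>w \<in> {0..l q (i+1)}. \<forall>z \<in> {0..i}.
           f q i (real w) (real z) < f q i 0 (real (i+1))
         \<and> f q i 0 (real (i+1)) =
             ((\<Sum>j=1..i. 2 * real (l q j)) + real i + 1) /
             ((\<Sum>j=1..i. real j * real (l q j)) + real i + 1)"
proof (intro ballI conjI)
  define A where "A = (\<Sum>j=1..i. 2 * real (l q j))"
  define B where "B = (\<Sum>j=1..i. real j * real (l q j))"
  have "A < B"
    using assms(4) unfolding A_def B_def
    by (metis (no_types, lifting) of_nat_less_iff of_nat_mult of_nat_sum of_nat_numeral sum.cong)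
  moreover have "0 \<le> A"
    unfolding A_def by (auto intro: sum_nonneg)
  moreover have "2 * B \<le> real i * A"
  proof -
    have "A = 2 * (\<Sum>j=1..i. real (l q j))"
      unfolding A_def by (simp add: sum_distrib_left)
    then show ?thesis
      using sum_index_weighted_le[of "\<lambda>j. real (l q j)" i] unfolding B_def by simp
  qed
  ultimately have frac_less:
    "\<And>w z. 0 \<le> w \<Longrightarrow> 0 \<le> z \<Longrightarrow> z < real i + 1 \<Longrightarrow>
       (A + 2 * w + z) / (B + (real i + 1) * w + z) < (A + (real i + 1)) / (B + (real i + 1))"
    using assms(3) by (intro frac_shifted_less) (auto simp: algebra_simps)
  fix w z assume "z \<in> {0..i}"
  then show "f q i (real w) (real z) < f q i 0 (real (i+1))"
    using frac_less[of "real w" "real z"] unfolding f_def A_def B_def by (simp add: add.assoc add.commute)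
  show "f q i 0 (real (i+1)) =
      ((\<Sum>j=1..i. 2 * real (l q j)) + real i + 1) /
      ((\<Sum>j=1..i. real j * real (l q j)) + real i + 1)"
    unfolding f_def by (simp add: add.assoc add.commute)
qed

end
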